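(* (a) Let $\{\mu_n\}$ be probability density functions on $\mathbb R^d$ which are uniformly bounded and uniformly equicontinuous, and suppose the corresponding probability measures converge weakly to a probability measure $\mu$. Then $\mu_n\to\mu$ in total variation. (b) Let $Q_n,Q\in\mathcal Q_c$ and let $P\in\mathcal P(\mathbb R^d)$ admit a density. If $PQ_n\to PQ$ weakly, then $PQ_n\to PQ$ in total variation. If moreover the density of $P$ is strictly positive, then $P'Q_n\to P'Q$ in total variation for every $P'\in\mathcal P(\mathbb R^d)$ admitting a density. (c) Let $Q_n,Q\in\mathcal Q_c$ with $PQ_n\to PQ$ weakly for some $P$ admitting a strictly positive density. Suppose $P'_n\to P'$ in total variation, where $P'$ admits a density. Then $P'_nQ_n\to P'Q$ in total variation.
   Context: Let $\mathcal M=\{1,\dots,M\}$. An $M$-cell quantizer is a Borel map $Q:\mathbb R^d\to\mathcal M$ with cells $Q^{-1}(i)$; $\mathcal Q_c$ is the set of quantizers all of whose cells are convex (the empty set is considered convex). For $P\in\mathcal P(\mathbb R^d)$ and a quantizer $Q$, $PQ$ denotes the probability measure on $\mathbb R^d\times\mathcal M$ given by $PQ(A\times\{i\})=P(A\cap Q^{-1}(i))$. The total variation distance is $d_{TV}(\mu,\nu)=2\sup_B|\mu(B)-\nu(B)|$. *)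

theory Defs
  imports "HOL-Probability.Probability"
begin

definition prob_borel :: "'a::topological_space measure \<Rightarrow> bool" where
  "prob_borel P \<longleftrightarrow> prob_space P \<and> sets P = sets borel"

definition weak_conv_gen :: "(nat \<Rightarrow> 'a::topological_space measure) \<Rightarrow> 'a measure \<Rightarrow> bool" where
  "weak_conv_gen \<mu>s \<mu> \<longleftrightarrow>
     (\<forall>f :: 'a \<Rightarrow> real. continuous_on UNIV f \<and> bounded (range f) \<longrightarrow>
        (\<lambda>n. integral\<^sup>L (\<mu>s n) f) \<longlonglongrightarrow> integral\<^sup>L \<mu> f)"

definition tv_dist :: "'a measure \<Rightarrow> 'a measure \<Rightarrow> real" where
  "tv_dist \<mu> \<nu> = 2 * (SUP B\<in>sets \<mu>. \<bar>measure \<mu> B - measure \<nu> B\<bar>)"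

definition has_density :: "'a::euclidean_space measure \<Rightarrow> bool" where
  "has_density P \<longleftrightarrow> (\<exists>f :: 'a \<Rightarrow> real. f \<in> borel_measurable borel \<and> (\<forall>x. 0 \<le> f x) \<and>
        P = density lborel (\<lambda>x. ennreal (f x)))"

definition has_pos_density :: "'a::euclidean_space measure \<Rightarrow> bool" where
  "has_pos_density P \<longleftrightarrow> (\<exists>f :: 'a \<Rightarrow> real. f \<in> borel_measurable borel \<and> (\<forall>x. 0 < f x) \<and>
        P = density lborel (\<lambda>x. ennreal (f x)))"

definition quantizer :: "nat \<Rightarrow> ('a::euclidean_space \<Rightarrow> nat) \<Rightarrow> bool" where
  "quantizer M Q \<longleftrightarrow> Q \<in> borel_measurable borel \<and> (\<forall>x. Q x \<in> {1..M})"

definition convex_quantizers :: "nat \<Rightarrow> ('a::euclidean_space \<Rightarrow> nat) set" where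
  "convex_quantizers M = {Q. quantizer M Q \<and> (\<forall>i\<in>{1..M}. convex (Q -` {i}))}"

text \<open>PQ(A x {i}) = P(A \<inter> Q^-1(i)): the image of P under x \<mapsto> (x, Q x).\<close>
definition joint :: "'a::euclidean_space measure \<Rightarrow> ('a \<Rightarrow> nat) \<Rightarrow> ('a \<times> nat) measure" where
  "joint P Q = distr P borel (\<lambda>x. (x, Q x))"

end

theory Submission
  imports Defs
begin

(*
  (a) Testing the densities against a narrow tent around x and using equicontinuity, weak
  convergence forces pointwise convergence f n -> g.  Fatou gives int g <= 1, and the tightness
  of mu, seen through compactly supported cutoffs where dominated convergence applies, gives
  int g >= 1.  Scheffe's lemma then yields f n -> g in L1, so the measures f n * lambda converge
  weakly both to mu and to g * lambda; hence mu = g * lambda, and d_TV <= 2 ||f n - g||_1 -> 0.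

  (b), (c) Since PQ is the image of P under x |-> (x, Q x),
  d_TV(P'_n Q_n, P' Q) <= d_TV(P'_n, P') + 2 P'(Q_n ~= Q).  Testing PQ_n -> PQ against
  (x, i) |-> phi_i x, with phi_i continuous approximations of the indicators of the cells of Q,
  shows P(Q_n ~= Q) -> 0.
  If P has a strictly positive density p and P' a density q, then
  P'(A) <= P'{q > K p} + K P(A), so P-null sequences of sets are P'-null.
*)

section \<open>Total variation distance\<close>

lemma prob_borelD:
  assumes "prob_borel P"
  shows "prob_space P" "sets P = sets borel" "space P = UNIV"
  using assms sets_eq_imp_space_eq[of P borel] unfolding prob_borel_def by auto

lemma measurable_prob_borel_iff:
  assumes "prob_borel P"
  shows "f \<in> P \<rightarrow>\<^sub>M N \<longleftrightarrow> f \<in> borel \<rightarrow>\<^sub>M N"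
  using measurable_cong_sets[OF prob_borelD(2)[OF assms] refl, of N] by blast

lemma abs_measure_diff_le_tv_dist:
  assumes "prob_space P1" "prob_space P2" "B \<in> sets P1"
  shows "\<bar>measure P1 B - measure P2 B\<bar> \<le> tv_dist P1 P2 / 2"
proof -
  have "\<bar>measure P1 B - measure P2 B\<bar> \<le> 1" for B
    using prob_space.prob_le_1[OF assms(1), of B] prob_space.prob_le_1[OF assms(2), of B]
      measure_nonneg[of P1 B] measure_nonneg[of P2 B]
    by (simp only: abs_le_iff) linarith
  then have "bdd_above ((\<lambda>B. \<bar>measure P1 B - measure P2 B\<bar>) ` sets P1)"
    by (intro bdd_aboveI2)
  then show ?thesis
    unfolding tv_dist_def using cSUP_upper[OF assms(3)] by simp
qed

lemma tv_dist_nonneg: "prob_space P1 \<Longrightarrow> prob_space P2 \<Longrightarrow> 0 \<le> tv_dist P1 P2"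
  using abs_measure_diff_le_tv_dist[of P1 P2 "{}"] by simp

lemma tv_dist_le:
  assumes "\<And>B. B \<in> sets P1 \<Longrightarrow> \<bar>measure P1 B - measure P2 B\<bar> \<le> c"
  shows "tv_dist P1 P2 \<le> 2 * c"
proof -
  have "(SUP B\<in>sets P1. \<bar>measure P1 B - measure P2 B\<bar>) \<le> c"
    by (rule cSUP_least) (use assms sets.empty_sets in auto)
  then show ?thesis unfolding tv_dist_def by simp
qed

lemma tv_dist_self: "tv_dist P P = 0"
  using sets.empty_sets[of P] unfolding tv_dist_def by (cases "sets P = {}") auto

lemma tv_dist_tendsto_zeroI:
  assumes "\<And>n. prob_space (Ps n)" "prob_space P"
    and "\<And>n. tv_dist (Ps n) P \<le> b n" "b \<longlonglongrightarrow> 0"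
  shows "(\<lambda>n. tv_dist (Ps n) P) \<longlonglongrightarrow> 0"
  by (rule tendsto_sandwich[OF always_eventually always_eventually tendsto_const assms(4)])
     (use assms(3) tv_dist_nonneg[OF assms(1,2)] in auto)

section \<open>Joint distributions of a point and its cell\<close>

lemma quantizerD:
  "quantizer M Q \<Longrightarrow> Q \<in> borel_measurable borel"
  "quantizer M Q \<Longrightarrow> Q x \<in> {1..M}"
  unfolding quantizer_def by auto

lemma convex_quantizer_imp_quantizer: "Q \<in> convex_quantizers M \<Longrightarrow> quantizer M Q"
  unfolding convex_quantizers_def by simp

lemma measurable_quantizer_graph:
  assumes "quantizer M Q"
  shows "(\<lambda>x. (x, Q x)) \<in> borel \<rightarrow>\<^sub>M (borel :: ('a::euclidean_space \<times> nat) measure)"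
  using measurable_Pair[OF measurable_ident_sets[OF refl] quantizerD(1)[OF assms]]
  by (simp add: borel_prod)

lemma sets_quantizer_disagreement:
  "quantizer M Q \<Longrightarrow> quantizer M R \<Longrightarrow> {x. R x \<noteq> Q x} \<in> sets borel"
  using quantizerD(1)[of M Q] quantizerD(1)[of M R] by measurable

lemma prob_borel_joint: "prob_borel P \<Longrightarrow> quantizer M Q \<Longrightarrow> prob_borel (joint P Q)"
  unfolding prob_borel_def joint_def
  by (auto intro!: prob_space.prob_space_distr
      simp: measurable_prob_borel_iff[unfolded prob_borel_def] measurable_quantizer_graph)

lemma (in finite_measure) abs_measure_diff_le:
  assumes "A \<in> sets M" "B \<in> sets M" "D \<in> sets M" "A - B \<subseteq> D" "B - A \<subseteq> D"
  shows "\<bar>measure M A - measure M B\<bar> \<le> measure M D"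
proof -
  have "A \<subseteq> B \<union> D" "B \<subseteq> A \<union> D" using assms(4,5) by blast+
  then have "measure M A \<le> measure M B + measure M D" "measure M B \<le> measure M A + measure M D"
    using finite_measure_mono measure_Un_le assms(1-3) order_trans by (metis sets.Un)+
  then show ?thesis by linarith
qed

lemma measure_joint:
  assumes "prob_borel P" "quantizer M Q" "B \<in> sets borel"
  shows "measure (joint P Q) B = measure P ((\<lambda>x. (x, Q x)) -` B)"
  using measure_distr[of "\<lambda>x. (x, Q x)" P borel B] assms prob_borelD(3)[OF assms(1)]
  by (simp add: joint_def measurable_prob_borel_iff measurable_quantizer_graph)

lemma tv_dist_joint_le:
  fixes P1 P2 :: "'a::euclidean_space measure"
  assumes P1: "prob_borel P1" and P2: "prob_borel P2" and Q1: "quantizer M Q1" and Q2: "quantizer M Q2"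
  shows "tv_dist (joint P1 Q1) (joint P2 Q2) \<le> tv_dist P1 P2 + 2 * measure P2 {x. Q1 x \<noteq> Q2 x}"
proof -
  interpret P2: prob_space P2 using prob_borelD(1)[OF P2] .
  have "\<bar>measure (joint P1 Q1) B - measure (joint P2 Q2) B\<bar>
          \<le> tv_dist P1 P2 / 2 + measure P2 {x. Q1 x \<noteq> Q2 x}"
    if "B \<in> sets (joint P1 Q1)" for B
  proof -
    have B: "B \<in> sets borel" using that by (simp add: joint_def)
    define S1 where "S1 = (\<lambda>x. (x, Q1 x)) -` B"
    define S2 where "S2 = (\<lambda>x. (x, Q2 x)) -` B"
    have S: "S1 \<in> sets borel" "S2 \<in> sets borel"
      using measurable_sets[OF measurable_quantizer_graph B] Q1 Q2 by (auto simp: S1_def S2_def)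
    have "\<bar>measure P1 S1 - measure P2 S1\<bar> \<le> tv_dist P1 P2 / 2"
      using abs_measure_diff_le_tv_dist prob_borelD[OF P1] prob_borelD(1)[OF P2] S by auto
    moreover have "\<bar>measure P2 S1 - measure P2 S2\<bar> \<le> measure P2 {x. Q1 x \<noteq> Q2 x}"
      by (rule P2.abs_measure_diff_le)
         (use S sets_quantizer_disagreement[OF Q2 Q1] prob_borelD(2)[OF P2] in
           \<open>auto simp: S1_def S2_def\<close>)
    ultimately show ?thesis
      using measure_joint[OF P1 Q1 B] measure_joint[OF P2 Q2 B] unfolding S1_def S2_def
      by linarith
  qed
  then show ?thesis
    using tv_dist_le[of "joint P1 Q1" "joint P2 Q2"] by fastforce
qed

lemma tv_dist_joint_tendsto_zero:
  fixes P' :: "'a::euclidean_space measure"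
  assumes "prob_borel P'" "\<And>n. prob_borel (Ps' n)" "\<And>n. quantizer M (Qs n)" "quantizer M Q"
    and "(\<lambda>n. tv_dist (Ps' n) P') \<longlonglongrightarrow> 0" "(\<lambda>n. measure P' {x. Qs n x \<noteq> Q x}) \<longlonglongrightarrow> 0"
  shows "(\<lambda>n. tv_dist (joint (Ps' n) (Qs n)) (joint P' Q)) \<longlonglongrightarrow> 0"
  using prob_borel_joint[OF assms(2,3)] prob_borel_joint[OF assms(1,4)]
    tv_dist_joint_le[OF assms(2,1,3,4)] tendsto_add[OF assms(5) tendsto_mult_right_zero[OF assms(6)]]
  by (intro tv_dist_tendsto_zeroI[where b="\<lambda>n. tv_dist (Ps' n) P' + 2 * measure P' {x. Qs n x \<noteq> Q x}"])
     (auto dest: prob_borelD(1))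

section \<open>Disagreement of quantizers under weak convergence\<close>

lemma bounded_range_unit_interval: "(\<And>x. f x \<in> {0..1::real}) \<Longrightarrow> bounded (range f)"
  by (rule bounded_subset[OF bounded_closed_interval[of 0 1]]) auto

lemma open_singleton_nat: "open {n::nat}"
proof (cases n)
  case 0
  then have "{n} = {..<1}" by auto
  then show ?thesis by simp
next
  case (Suc m)
  then have "{n} = {m<..<n+1}" by auto
  then show ?thesis by simp
qed

lemma continuous_on_nat_index:
  fixes \<phi> :: "nat \<Rightarrow> 'a::topological_space \<Rightarrow> 'b::topological_space"
  assumes "\<And>i. continuous_on UNIV (\<phi> i)"
  shows "continuous_on UNIV (\<lambda>z. \<phi> (snd z) (fst z))"
proof -
  have "continuous_on (UNIV \<times> {i}) (\<lambda>z. \<phi> i (fst z))" for i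
    by (intro continuous_on_compose2[OF assms[of i]] continuous_intros) auto
  then have "continuous_on (UNIV \<times> {i}) (\<lambda>z. \<phi> (snd z) (fst z))" for i
    by (rule continuous_on_eq) auto
  then have "continuous_on (\<Union>i. UNIV \<times> {i}) (\<lambda>z. \<phi> (snd z) (fst z))"
    by (intro continuous_on_open_UN open_Times) (auto simp: open_singleton_nat)
  moreover have "(\<Union>i. UNIV \<times> {i}) = (UNIV :: ('a \<times> nat) set)" by auto
  ultimately show ?thesis by simp
qed

lemma closed_open_approximation:
  fixes P :: "'a::{second_countable_topology, complete_space} measure"
  assumes "finite_measure P" "sets P = sets borel" "C \<in> sets borel" "\<eta> > 0"
  obtains F U where "closed F" "open U" "F \<subseteq> C" "C \<subseteq> U" "measure P (U - F) < \<eta>"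
proof -
  interpret finite_measure P by (rule assms(1))
  have fin: "emeasure P (space P) \<noteq> \<infinity>" by simp
  obtain K where K: "K \<subseteq> C" "compact K" "measure P C - \<eta>/2 < measure P K"
  proof (cases "measure P C < \<eta>/2")
    case True
    then show ?thesis using that[of "{}"] by auto
  next
    case False
    have "ennreal (measure P C - \<eta>/2) < emeasure P C"
      using False assms(4) by (simp add: emeasure_eq_measure ennreal_less_iff)
    also have "\<dots> = (SUP K \<in> {K. K \<subseteq> C \<and> compact K}. emeasure P K)"
      by (rule inner_regular[OF assms(2) fin assms(3)])
    finally obtain K where "K \<subseteq> C" "compact K" "ennreal (measure P C - \<eta>/2) < emeasure P K"
      by (auto simp: less_SUP_iff)
    with False show ?thesis
      using that[of K] by (auto simp: emeasure_eq_measure ennreal_less_iff)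
  qed
  obtain U where U: "C \<subseteq> U" "open U" "measure P U < measure P C + \<eta>/2"
  proof -
    have "(INF U \<in> {U. C \<subseteq> U \<and> open U}. emeasure P U) = emeasure P C"
      by (rule outer_regular[OF assms(2) fin assms(3), symmetric])
    also have "\<dots> < ennreal (measure P C + \<eta>/2)"
      using assms(4) by (simp add: emeasure_eq_measure ennreal_less_iff)
    finally obtain U where "C \<subseteq> U" "open U" "emeasure P U < ennreal (measure P C + \<eta>/2)"
      by (auto simp: INF_less_iff)
    then show ?thesis using that[of U] by (auto simp: emeasure_eq_measure ennreal_less_iff)
  qed
  have "closed K" using K(2) by (rule compact_imp_closed)
  moreover have "measure P (U - K) = measure P U - measure P K"
    using \<open>closed K\<close> U K assms(2) by (intro finite_measure_Diff) auto
  ultimately show ?thesis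
    using that[of K U] K U by auto
qed

lemma Urysohn_closed_open:
  fixes F U :: "'a::euclidean_space set"
  assumes "closed F" "open U" "F \<subseteq> U"
  obtains \<phi> :: "'a \<Rightarrow> real"
  where "continuous_on UNIV \<phi>" "\<And>x. \<phi> x \<in> {0..1}" "\<And>x. x \<in> F \<Longrightarrow> \<phi> x = 1"
    "\<And>x. x \<notin> U \<Longrightarrow> \<phi> x = 0"
proof -
  have "F \<inter> - U = {}" using assms(3) by auto
  then obtain \<phi> :: "'a \<Rightarrow> real" where "continuous_on UNIV \<phi>" "\<And>x. \<phi> x \<in> closed_segment 1 0"
      "\<And>x. x \<in> F \<Longrightarrow> \<phi> x = 1" "\<And>x. x \<in> - U \<Longrightarrow> \<phi> x = 0"
    using Urysohn[of F "- U" 1 0] assms(1,2) by (metis closed_Compl)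
  then show ?thesis
    using that[of \<phi>] by (auto simp: closed_segment_eq_real_ivl)
qed

lemma cell_separating_function:
  fixes P :: "'a::euclidean_space measure"
  assumes P: "prob_borel P" and Q: "quantizer M Q" and "\<eta> > 0"
  obtains g :: "'a \<times> nat \<Rightarrow> real" and E
  where "continuous_on UNIV g" "\<And>z. g z \<in> {0..1}" "E \<in> sets borel" "measure P E < \<eta>"
    "\<And>x j. x \<notin> E \<Longrightarrow> j \<in> {1..M} \<Longrightarrow> g (x, j) = (if j = Q x then 1 else 0)"
proof -
  interpret prob_space P using prob_borelD(1)[OF P] .
  have M: "M > 0" using quantizerD(2)[OF Q] by (metis atLeastAtMost_iff not_gr0 not_one_le_zero order_trans)
  have cell: "Q -` {i} \<in> sets borel" for i
    using measurable_sets[OF quantizerD(1)[OF Q], of "{i}"] by simp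
  have "\<eta> / M > 0" using M assms(3) by simp
  then have "\<forall>i. \<exists>F U. closed F \<and> open U \<and> F \<subseteq> Q -` {i} \<and> Q -` {i} \<subseteq> U \<and> measure P (U - F) < \<eta> / M"
    using closed_open_approximation[OF finite_measure_axioms prob_borelD(2)[OF P] cell] by metis
  then obtain F U where FU: "\<And>i. closed (F i)" "\<And>i. open (U i)" "\<And>i. F i \<subseteq> Q -` {i}"
      "\<And>i. Q -` {i} \<subseteq> U i" "\<And>i. measure P (U i - F i) < \<eta> / M"
    by metis
  have "\<exists>\<phi> :: 'a \<Rightarrow> real. continuous_on UNIV \<phi> \<and> (\<forall>x. \<phi> x \<in> {0..1}) \<and>
      (\<forall>x \<in> F i. \<phi> x = 1) \<and> (\<forall>x. x \<notin> U i \<longrightarrow> \<phi> x = 0)" for i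
  proof -
    have "F i \<subseteq> U i" using FU(3,4)[of i] by blast
    from Urysohn_closed_open[OF FU(1,2) this] show ?thesis by metis
  qed
  then obtain \<phi> :: "nat \<Rightarrow> 'a \<Rightarrow> real" where \<phi>: "\<And>i. continuous_on UNIV (\<phi> i)"
      "\<And>i x. \<phi> i x \<in> {0..1}" "\<And>i x. x \<in> F i \<Longrightarrow> \<phi> i x = 1" "\<And>i x. x \<notin> U i \<Longrightarrow> \<phi> i x = 0"
    by metis
  define E where "E = (\<Union>i\<in>{1..M}. U i - F i)"
  have E_sets: "E \<in> sets borel" using FU(1,2) unfolding E_def by auto
  have "measure P E \<le> (\<Sum>i\<in>{1..M}. measure P (U i - F i))"
    unfolding E_def using FU(1,2) prob_borelD(2)[OF P] by (intro measure_UNION_le) auto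
  also have "\<dots> < (\<Sum>i\<in>{1..M}. \<eta> / M)"
    using M FU(5) by (intro sum_strict_mono) auto
  finally have E_small: "measure P E < \<eta>" using M by simp
  have sep: "\<phi> j x = (if j = Q x then 1 else 0)" if "x \<notin> E" "j \<in> {1..M}" for j x
  proof (cases "j = Q x")
    case True
    then show ?thesis using that FU(4)[of j] \<phi>(3) unfolding E_def by auto
  next
    case False
    then have "x \<notin> U j" using that FU(3)[of j] unfolding E_def by auto
    with False show ?thesis using \<phi>(4) by simp
  qed
  show ?thesis
  proof (rule that)
    show "continuous_on UNIV (\<lambda>z. \<phi> (snd z) (fst z))"
      by (rule continuous_on_nat_index[OF \<phi>(1)])
  qed (use \<phi>(2) E_sets E_small sep in auto)
qed

lemma integral_joint:
  fixes P :: "'a::euclidean_space measure" and g :: "'a \<times> nat \<Rightarrow> real"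
  assumes "prob_borel P" "quantizer M R" "g \<in> borel_measurable borel"
  shows "integral\<^sup>L (joint P R) g = (\<integral>x. g (x, R x) \<partial>P)"
proof -
  have "(\<lambda>x. (x, R x)) \<in> P \<rightarrow>\<^sub>M borel"
    using measurable_quantizer_graph[OF assms(2)] measurable_prob_borel_iff[OF assms(1)] by blast
  then show ?thesis unfolding joint_def by (rule integral_distr[OF _ assms(3)])
qed

lemma measure_disagreement_le:
  fixes P :: "'a::euclidean_space measure" and g :: "'a \<times> nat \<Rightarrow> real"
  assumes P: "prob_borel P" and Q: "quantizer M Q" and R: "quantizer M R"
    and g: "g \<in> borel_measurable borel" "\<And>z. g z \<in> {0..1}" and E: "E \<in> sets borel"
    and sep: "\<And>x j. x \<notin> E \<Longrightarrow> j \<in> {1..M} \<Longrightarrow> g (x, j) = (if j = Q x then 1 else 0)"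
  shows "measure P {x. R x \<noteq> Q x}
    \<le> integral\<^sup>L (joint P Q) g - integral\<^sup>L (joint P R) g + 2 * measure P E"
proof -
  interpret prob_space P using prob_borelD(1)[OF P] .
  have integrable_g: "integrable P (\<lambda>x. g (x, S x))" if "quantizer M S" for S
    using measurable_compose[OF measurable_quantizer_graph[OF that] g(1)] g(2)
    by (intro integrable_const_bound[where B=1]) (auto simp: measurable_prob_borel_iff[OF P])
  have sets: "{x. R x \<noteq> Q x} \<in> sets P" "E \<in> sets P"
    using sets_quantizer_disagreement[OF Q R] E prob_borelD(2)[OF P] by auto
  then have integrable_indicator: "integrable P (indicator A :: 'a \<Rightarrow> real)" if "A \<in> {{x. R x \<noteq> Q x}, E}" for A
    using that by (auto intro!: integrable_real_indicator simp: less_top[symmetric])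
  have "measure P {x. R x \<noteq> Q x} = (\<integral>x. indicator {x. R x \<noteq> Q x} x \<partial>P)"
    using sets by simp
  also have "\<dots> \<le> (\<integral>x. g (x, Q x) - g (x, R x) + 2 * indicator E x \<partial>P)"
  proof (rule integral_mono)
    fix x
    show "indicator {x. R x \<noteq> Q x} x \<le> g (x, Q x) - g (x, R x) + 2 * indicator E x"
      using sep[of x "Q x"] sep[of x "R x"] quantizerD(2)[OF Q, of x] quantizerD(2)[OF R, of x]
        g(2)[of "(x, Q x)"] g(2)[of "(x, R x)"]
      by (cases "x \<in> E") (auto simp: indicator_def)
  qed (use integrable_g[OF Q] integrable_g[OF R] integrable_indicator in auto)
  also have "\<dots> = integral\<^sup>L (joint P Q) g - integral\<^sup>L (joint P R) g + 2 * measure P E"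
    using integrable_g[OF Q] integrable_g[OF R] integrable_indicator sets
    by (simp add: integral_joint[OF P Q g(1)] integral_joint[OF P R g(1)])
  finally show ?thesis .
qed

lemma measure_disagreement_tendsto_zero:
  fixes P :: "'a::euclidean_space measure"
  assumes P: "prob_borel P" and Qs: "\<And>n. quantizer M (Qs n)" and Q: "quantizer M Q"
    and W: "weak_conv_gen (\<lambda>n. joint P (Qs n)) (joint P Q)"
  shows "(\<lambda>n. measure P {x. Qs n x \<noteq> Q x}) \<longlonglongrightarrow> 0"
proof (rule order_tendstoI)
  fix a :: real assume "a < 0"
  then show "\<forall>\<^sub>F n in sequentially. a < measure P {x. Qs n x \<noteq> Q x}"
    by (simp add: less_le_trans)
next
  fix e :: real assume e: "0 < e"
  obtain g :: "'a \<times> nat \<Rightarrow> real" and E where g: "continuous_on UNIV g" "\<And>z. g z \<in> {0..1}"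
      and E: "E \<in> sets borel" "measure P E < e/4"
      and sep: "\<And>x j. x \<notin> E \<Longrightarrow> j \<in> {1..M} \<Longrightarrow> g (x, j) = (if j = Q x then 1 else 0)"
    using cell_separating_function[OF P Q, of "e/4"] e by auto
  have "(\<lambda>n. integral\<^sup>L (joint P (Qs n)) g) \<longlonglongrightarrow> integral\<^sup>L (joint P Q) g"
    using W g bounded_range_unit_interval unfolding weak_conv_gen_def by blast
  then have "\<forall>\<^sub>F n in sequentially. integral\<^sup>L (joint P Q) g - e/2 < integral\<^sup>L (joint P (Qs n)) g"
    using e by (intro order_tendstoD(1)) auto
  then show "\<forall>\<^sub>F n in sequentially. measure P {x. Qs n x \<noteq> Q x} < e"
  proof eventually_elim
    case (elim n)
    have "measure P {x. Qs n x \<noteq> Q x}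
        \<le> integral\<^sup>L (joint P Q) g - integral\<^sup>L (joint P (Qs n)) g + 2 * measure P E"
      using measure_disagreement_le[OF P Q Qs[of n] borel_measurable_continuous_onI[OF g(1)] g(2) E(1) sep] .
    also have "\<dots> < e/2 + 2 * (e/4)"
      using elim E(2) by linarith
    finally show ?case by simp
  qed
qed

section \<open>Null sequences under a positive density\<close>

lemma emeasure_density_le_threshold:
  fixes p q :: "'a \<Rightarrow> real"
  assumes "p \<in> borel_measurable N" "q \<in> borel_measurable N" "\<And>x. 0 \<le> p x" "S \<in> sets N" "0 \<le> c"
  shows "emeasure (density N (\<lambda>x. ennreal (q x))) S
    \<le> emeasure (density N (\<lambda>x. ennreal (q x))) {x \<in> space N. c * p x < q x}
      + ennreal c * emeasure (density N (\<lambda>x. ennreal (p x))) S"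
proof -
  let ?B = "{x \<in> space N. c * p x < q x}"
  have B: "?B \<in> sets N" using assms(1,2) by measurable
  have "emeasure (density N (\<lambda>x. ennreal (q x))) S = (\<integral>\<^sup>+x. ennreal (q x) * indicator S x \<partial>N)"
    using assms(2,4) by (subst emeasure_density) auto
  also have "\<dots> \<le> (\<integral>\<^sup>+x. ennreal (q x) * indicator ?B x + ennreal c * (ennreal (p x) * indicator S x) \<partial>N)"
  proof (rule nn_integral_mono)
    fix x assume x: "x \<in> space N"
    show "ennreal (q x) * indicator S x \<le> ennreal (q x) * indicator ?B x + ennreal c * (ennreal (p x) * indicator S x)"
    proof (cases "x \<in> ?B")
      case False
      with x have "ennreal (q x) \<le> ennreal c * ennreal (p x)"
        using assms(3,5) by (simp add: ennreal_mult[symmetric] ennreal_leI)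
      then show ?thesis using False by (simp add: indicator_def)
    qed (simp add: indicator_def)
  qed
  also have "\<dots> = emeasure (density N (\<lambda>x. ennreal (q x))) ?B
      + ennreal c * emeasure (density N (\<lambda>x. ennreal (p x))) S"
    using assms B by (simp add: nn_integral_add nn_integral_cmult emeasure_density)
  finally show ?thesis .
qed

lemma (in finite_measure) measure_exceeds_multiple_tendsto_zero:
  assumes "p \<in> borel_measurable M" "q \<in> borel_measurable M" "\<And>x. 0 < p x"
  shows "(\<lambda>K. measure M {x \<in> space M. real K * p x < q x}) \<longlonglongrightarrow> 0"
proof -
  define B where "B K = {x \<in> space M. real K * p x < q x}" for K :: nat
  have "(\<lambda>K. measure M (B K)) \<longlonglongrightarrow> measure M (\<Inter>K. B K)"
  proof (rule finite_Lim_measure_decseq)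
    show "range B \<subseteq> sets M" using assms(1,2) unfolding B_def by auto
    show "decseq B"
      unfolding B_def decseq_def using assms(3) by (auto intro: order.strict_trans1[rotated] mult_right_mono)
  qed
  moreover have "(\<Inter>K. B K) = {}"
  proof -
    have "\<exists>K. q x \<le> real K * p x" for x
      using reals_Archimedean2[of "q x / p x"] assms(3)[of x] by (auto simp: field_simps intro: less_imp_le)
    then show ?thesis unfolding B_def by (auto simp: not_less[symmetric])
  qed
  ultimately show ?thesis unfolding B_def by simp
qed

lemma tendsto_zero_if_le_add_mult:
  fixes a b c :: "nat \<Rightarrow> real"
  assumes "\<And>n. 0 \<le> a n" "\<And>n. 0 \<le> c n" "\<And>n K. a n \<le> b K + real K * c n"
    and "b \<longlonglongrightarrow> 0" "c \<longlonglongrightarrow> 0"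
  shows "a \<longlonglongrightarrow> 0"
proof (rule order_tendstoI)
  fix e :: real assume e: "0 < e"
  obtain K where K: "b K < e/2"
    using order_tendstoD(2)[OF assms(4), of "e/2"] e by (auto simp: eventually_sequentially)
  have "\<forall>\<^sub>F n in sequentially. c n < e / (2 * (real K + 1))"
    by (rule order_tendstoD(2)[OF assms(5)]) (use e in auto)
  then show "\<forall>\<^sub>F n in sequentially. a n < e"
  proof eventually_elim
    case (elim n)
    have "real K * c n \<le> (real K + 1) * c n"
      using assms(2) by (intro mult_right_mono) auto
    also have "\<dots> < e/2"
      using elim by (simp add: field_simps)
    finally show ?case using assms(3)[of n K] K by linarith
  qed
next
  fix d :: real assume "d < 0"
  then show "\<forall>\<^sub>F n in sequentially. d < a n" using assms(1) by (simp add: less_le_trans)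
qed

lemma measure_tendsto_zero_if_pos_density:
  fixes P P' :: "'a::euclidean_space measure"
  assumes "has_pos_density P" "prob_borel P" "has_density P'" "prob_borel P'"
    and A: "\<And>n. A n \<in> sets borel" and lim: "(\<lambda>n. measure P (A n)) \<longlonglongrightarrow> 0"
  shows "(\<lambda>n. measure P' (A n)) \<longlonglongrightarrow> 0"
proof -
  obtain p where p: "p \<in> borel_measurable borel" "\<And>x. 0 < p x" "P = density lborel (\<lambda>x. ennreal (p x))"
    using assms(1) unfolding has_pos_density_def by auto
  obtain q where q: "q \<in> borel_measurable borel" "P' = density lborel (\<lambda>x. ennreal (q x))"
    using assms(3) unfolding has_density_def by auto
  interpret P: prob_space P using prob_borelD(1)[OF assms(2)] .
  interpret P': prob_space P' using prob_borelD(1)[OF assms(4)] .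
  define B where "B K = {x. real K * p x < q x}" for K :: nat
  have bound: "measure P' S \<le> measure P' (B K) + real K * measure P S" if "S \<in> sets borel" for S K
  proof -
    have "emeasure P' S \<le> emeasure P' (B K) + ennreal (real K) * emeasure P S"
      using emeasure_density_le_threshold[of p lborel q S "real K"] p(1,2) q(1) that
      unfolding p(3) q(2) B_def by (simp add: less_imp_le)
    then show ?thesis
      unfolding P.emeasure_eq_measure P'.emeasure_eq_measure
      by (simp add: ennreal_mult[symmetric] ennreal_plus[symmetric] del: ennreal_plus)
  qed
  have "(\<lambda>K. measure P' (B K)) \<longlonglongrightarrow> 0"
    using P'.measure_exceeds_multiple_tendsto_zero[of p q] p q prob_borelD(2,3)[OF assms(4)]
    unfolding B_def by (simp add: measurable_prob_borel_iff[OF assms(4)])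
  from tendsto_zero_if_le_add_mult[OF measure_nonneg measure_nonneg bound[OF A] this lim]
  show ?thesis .
qed

lemma measure_disagreement_tendsto_zero_if_pos_density:
  fixes P P' :: "'a::euclidean_space measure"
  assumes "has_pos_density P" "prob_borel P" "has_density P'" "prob_borel P'"
    and "\<And>n. quantizer M (Qs n)" "quantizer M Q"
    and "weak_conv_gen (\<lambda>n. joint P (Qs n)) (joint P Q)"
  shows "(\<lambda>n. measure P' {x. Qs n x \<noteq> Q x}) \<longlonglongrightarrow> 0"
  using sets_quantizer_disagreement[OF assms(6,5)] measure_disagreement_tendsto_zero[OF assms(2,5-7)]
  by (rule measure_tendsto_zero_if_pos_density[OF assms(1-4)])

section \<open>Uniformly bounded equicontinuous densities\<close>

definition tent :: "'a::metric_space \<Rightarrow> real \<Rightarrow> 'a \<Rightarrow> real" where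
  "tent x \<delta> y = max 0 (1 - dist x y / \<delta>)"

lemma tent_function:
  fixes x :: "'a::euclidean_space"
  assumes "\<delta> > 0"
  defines "\<rho> \<equiv> tent x \<delta>"
  shows "continuous_on UNIV \<rho>" "\<And>y. \<rho> y \<in> {0..1}" "\<And>y. \<rho> y \<noteq> 0 \<Longrightarrow> dist x y < \<delta>"
    "integrable lborel \<rho>" "0 < integral\<^sup>L lborel \<rho>"
proof -
  show cont: "continuous_on UNIV \<rho>" unfolding \<rho>_def tent_def[abs_def] by (intro continuous_intros) (use assms in auto)
  show range: "\<rho> y \<in> {0..1}" for y unfolding \<rho>_def tent_def using assms by simp
  show support: "\<rho> y \<noteq> 0 \<Longrightarrow> dist x y < \<delta>" for y
    unfolding \<rho>_def tent_def using assms by (auto simp: max_def divide_less_eq_1 split: if_splits)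
  have le: "norm (\<rho> y) \<le> norm (indicator (cball x \<delta>) y :: real)" for y
    using range[of y] support[of y] by (cases "\<rho> y = 0") (auto simp: indicator_def)
  have "integrable lborel (indicator (cball x \<delta>) :: 'a \<Rightarrow> real)"
    using emeasure_bounded_finite[of "cball x \<delta>"]
    by (intro integrable_real_indicator) (auto simp: less_top[symmetric])
  then show int: "integrable lborel \<rho>"
    by (rule Bochner_Integration.integrable_bound)
       (use le borel_measurable_continuous_onI[OF cont] in auto)
  have "(1/2) * indicator (ball x (\<delta>/2)) y \<le> \<rho> y" for y
    unfolding \<rho>_def tent_def using assms by (auto simp: indicator_def field_simps)
  then have "(\<integral>y. (1/2) * indicator (ball x (\<delta>/2)) y \<partial>lborel) \<le> integral\<^sup>L lborel \<rho>"
    using emeasure_lborel_ball_finite[of x "\<delta>/2"]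
    by (intro integral_mono int integrable_mult_right integrable_real_indicator) auto
  then have "(1/2) * measure lborel (ball x (\<delta>/2)) \<le> integral\<^sup>L lborel \<rho>"
    using emeasure_lborel_ball_finite[of x "\<delta>/2"] by simp
  moreover have "0 < measure lborel (ball x (\<delta>/2))"
    using assms by (simp add: measure_def emeasure_ball enn2real_mult)
  ultimately show "0 < integral\<^sup>L lborel \<rho>" by linarith
qed

lemma integrable_mult_tent:
  fixes h :: "'a::euclidean_space \<Rightarrow> real"
  assumes "\<delta> > 0" "h \<in> borel_measurable borel" "\<And>y. \<bar>h y\<bar> \<le> C"
  shows "integrable lborel (\<lambda>y. h y * tent x \<delta> y)"
proof (rule Bochner_Integration.integrable_bound[OF integrable_mult_right[OF tent_function(4)[OF assms(1)], of C]])
  show "(\<lambda>y. h y * tent x \<delta> y) \<in> borel_measurable lborel"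
    using assms(2)
    by (simp add: borel_measurable_times borel_measurable_continuous_onI[OF tent_function(1)[OF assms(1)]])
  show "AE y in lborel. norm (h y * tent x \<delta> y) \<le> norm (C * tent x \<delta> y)"
    using assms(3) tent_function(2)[OF assms(1)]
    by (intro AE_I2) (auto simp: abs_mult intro!: mult_right_mono order_trans[OF _ abs_ge_self])
qed

lemma integral_mult_tent_approx:
  fixes h :: "'a::euclidean_space \<Rightarrow> real"
  assumes "\<delta> > 0" "integrable lborel (\<lambda>y. h y * tent x \<delta> y)"
    and "\<And>y. dist x y < \<delta> \<Longrightarrow> \<bar>h y - h x\<bar> \<le> \<epsilon>"
  shows "\<bar>(\<integral>y. h y * tent x \<delta> y \<partial>lborel) - integral\<^sup>L lborel (tent x \<delta>) * h x\<bar>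
    \<le> integral\<^sup>L lborel (tent x \<delta>) * \<epsilon>"
proof -
  note \<rho> = tent_function[OF assms(1), of x]
  have "(\<integral>y. (h y - h x) * tent x \<delta> y \<partial>lborel)
      = (\<integral>y. h y * tent x \<delta> y \<partial>lborel) - (\<integral>y. h x * tent x \<delta> y \<partial>lborel)"
    unfolding left_diff_distrib
    by (rule Bochner_Integration.integral_diff[OF assms(2)]) (use \<rho>(4) in simp)
  then have "(\<integral>y. h y * tent x \<delta> y \<partial>lborel) - integral\<^sup>L lborel (tent x \<delta>) * h x
      = (\<integral>y. (h y - h x) * tent x \<delta> y \<partial>lborel)"
    by (simp add: mult.commute)
  also have "\<bar>\<dots>\<bar> \<le> (\<integral>y. \<epsilon> * tent x \<delta> y \<partial>lborel)"
  proof (rule integral_abs_bound_integral)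
    show "integrable lborel (\<lambda>y. (h y - h x) * tent x \<delta> y)"
      using assms(2) \<rho>(4) by (simp add: left_diff_distrib)
    show "\<bar>(h y - h x) * tent x \<delta> y\<bar> \<le> \<epsilon> * tent x \<delta> y" for y
      using assms(3)[of y] \<rho>(2,3)[of y]
      by (cases "tent x \<delta> y = 0") (auto simp: abs_mult intro!: mult_right_mono)
  qed (use \<rho>(4) in simp)
  finally show ?thesis by (simp add: mult.commute)
qed

lemma pointwise_convergent_if_equicontinuous:
  fixes f :: "nat \<Rightarrow> 'a::euclidean_space \<Rightarrow> real"
  assumes fm: "\<And>n. f n \<in> borel_measurable borel" and fC: "\<And>n x. \<bar>f n x\<bar> \<le> C"
    and eqc: "\<forall>e>0. \<exists>\<delta>>0. \<forall>n x y. dist x y < \<delta> \<longrightarrow> \<bar>f n x - f n y\<bar> < e"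
    and conv: "\<And>\<phi>. continuous_on UNIV \<phi> \<Longrightarrow> bounded (range \<phi>) \<Longrightarrow>
      convergent (\<lambda>n. \<integral>y. f n y * \<phi> y \<partial>lborel)"
  shows "convergent (\<lambda>n. f n x)"
proof (rule Cauchy_convergent, rule CauchyI)
  fix e :: real assume e: "0 < e"
  obtain \<delta> where \<delta>: "\<delta> > 0" "\<And>n x y. dist x y < \<delta> \<Longrightarrow> \<bar>f n x - f n y\<bar> < e/4"
    using eqc[rule_format, of "e/4"] e by auto
  note \<rho> = tent_function[OF \<delta>(1), of x]
  define c where "c = integral\<^sup>L lborel (tent x \<delta>)"
  define a where "a n = (\<integral>y. f n y * tent x \<delta> y \<partial>lborel)" for n
  have a_approx: "\<bar>a n - c * f n x\<bar> \<le> c * (e/4)" for n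
    unfolding a_def c_def using \<delta>(1) \<delta>(2)[of _ x n]
    by (intro integral_mult_tent_approx integrable_mult_tent[OF \<delta>(1) fm fC])
       (auto simp: dist_commute less_imp_le)
  have "convergent a"
    unfolding a_def using conv[OF \<rho>(1) bounded_range_unit_interval[OF \<rho>(2)]] .
  then obtain N where N: "\<And>m n. m \<ge> N \<Longrightarrow> n \<ge> N \<Longrightarrow> \<bar>a m - a n\<bar> < c * (e/4)"
    using CauchyD[OF convergent_Cauchy, of a "c * (e/4)"] \<rho>(5) e by (auto simp: c_def)
  show "\<exists>N. \<forall>m\<ge>N. \<forall>n\<ge>N. norm (f m x - f n x) < e"
  proof (intro exI allI impI)
    fix m n assume "N \<le> m" "N \<le> n"
    have "c * \<bar>f m x - f n x\<bar> = \<bar>c * f m x - c * f n x\<bar>"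
      using \<rho>(5) unfolding c_def right_diff_distrib[symmetric] by (simp add: abs_mult)
    also have "\<dots> \<le> \<bar>a m - c * f m x\<bar> + \<bar>a m - a n\<bar> + \<bar>a n - c * f n x\<bar>" by linarith
    also have "\<dots> < c * (3 * (e/4))"
      using a_approx[of m] a_approx[of n] N[of m n] \<open>N \<le> m\<close> \<open>N \<le> n\<close> by linarith
    finally have "c * \<bar>f m x - f n x\<bar> < c * (3 * (e/4))" .
    then show "norm (f m x - f n x) < e"
      using \<rho>(5) e unfolding c_def by (simp add: mult_less_cancel_left_pos)
  qed
qed

lemma integral_infdist_approx_tendsto:
  fixes \<mu> :: "'a::metric_space measure"
  assumes "finite_measure \<mu>" "sets \<mu> = sets borel" "closed F" "F \<noteq> {}"
  shows "(\<lambda>k. \<integral>x. max 0 (1 - real k * infdist x F) \<partial>\<mu>) \<longlonglongrightarrow> measure \<mu> F"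
proof -
  interpret finite_measure \<mu> by (rule assms(1))
  have meas: "f \<in> borel_measurable \<mu>" if "f \<in> borel_measurable borel" for f :: "'a \<Rightarrow> real"
    using that measurable_cong_sets[OF assms(2) refl, of "borel :: real measure"] by blast
  have "(\<lambda>k. \<integral>x. max 0 (1 - real k * infdist x F) \<partial>\<mu>) \<longlonglongrightarrow> (\<integral>x. indicator F x \<partial>\<mu>)"
  proof (rule integral_dominated_convergence[where w="\<lambda>_. 1"])
    show "(\<lambda>x. max 0 (1 - real k * infdist x F)) \<in> borel_measurable \<mu>" for k
      by (intro meas borel_measurable_continuous_onI continuous_intros)
    show "AE x in \<mu>. norm (max 0 (1 - real k * infdist x F)) \<le> 1" for k
      using infdist_nonneg[of _ F] by (intro AE_I2) (auto simp: mult_nonneg_nonneg)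
    show "AE x in \<mu>. (\<lambda>k. max 0 (1 - real k * infdist x F)) \<longlonglongrightarrow> indicator F x"
    proof (intro AE_I2)
      fix x
      show "(\<lambda>k. max 0 (1 - real k * infdist x F)) \<longlonglongrightarrow> indicator F x"
      proof (cases "x \<in> F")
        case False
        then have pos: "infdist x F > 0"
          using infdist_pos_not_in_closed assms(3,4) by blast
        obtain K :: nat where "1 / infdist x F < real K" using reals_Archimedean2 by blast
        then have "1 < real k * infdist x F" if "K \<le> k" for k
        proof -
          have "real K * infdist x F \<le> real k * infdist x F"
            using pos that by (intro mult_right_mono) auto
          moreover have "1 < real K * infdist x F"
            using \<open>1 / infdist x F < real K\<close> pos by (simp add: field_simps)
          ultimately show ?thesis by linarith
        qed
        then have "\<forall>k\<ge>K. max 0 (1 - real k * infdist x F) = 0" by force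
        then show ?thesis
          using False by (auto simp: eventually_sequentially intro!: tendsto_eventually exI[of _ K])
      qed simp
    qed
  qed (use assms(3) in \<open>auto intro: meas\<close>)
  then show ?thesis using sets_eq_imp_space_eq[OF assms(2)] by simp
qed

lemma finite_measure_eqI_bounded_continuous:
  fixes \<mu> \<nu> :: "'a::{second_countable_topology, complete_space} measure"
  assumes "finite_measure \<mu>" "sets \<mu> = sets borel" "finite_measure \<nu>" "sets \<nu> = sets borel"
    and eq: "\<And>\<phi> :: 'a \<Rightarrow> real. continuous_on UNIV \<phi> \<Longrightarrow> bounded (range \<phi>) \<Longrightarrow>
      (\<integral>x. \<phi> x \<partial>\<mu>) = (\<integral>x. \<phi> x \<partial>\<nu>)"
    and B: "B \<in> sets borel"
  shows "emeasure \<mu> B = emeasure \<nu> B"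
proof -
  interpret \<mu>: finite_measure \<mu> by (rule assms(1))
  interpret \<nu>: finite_measure \<nu> by (rule assms(3))
  have closed_eq: "emeasure \<mu> F = emeasure \<nu> F" if F: "closed F" for F
  proof (cases "F = {}")
    case False
    have "(\<integral>x. max 0 (1 - real k * infdist x F) \<partial>\<mu>) = (\<integral>x. max 0 (1 - real k * infdist x F) \<partial>\<nu>)" for k
      using infdist_nonneg[of _ F]
      by (intro eq bounded_range_unit_interval continuous_intros) (auto simp: mult_nonneg_nonneg)
    then have "measure \<mu> F = measure \<nu> F"
      using integral_infdist_approx_tendsto[OF assms(1,2) F False]
        integral_infdist_approx_tendsto[OF assms(3,4) F False] LIMSEQ_unique by simp
    then show ?thesis
      using F assms(2,4) by (simp add: \<mu>.emeasure_eq_measure \<nu>.emeasure_eq_measure)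
  qed simp
  have "emeasure \<mu> B = (SUP K \<in> {K. K \<subseteq> B \<and> compact K}. emeasure \<mu> K)"
    by (rule inner_regular[OF assms(2) _ B]) simp
  also have "\<dots> = (SUP K \<in> {K. K \<subseteq> B \<and> compact K}. emeasure \<nu> K)"
    using closed_eq compact_imp_closed by (intro SUP_cong) auto
  also have "\<dots> = emeasure \<nu> B"
    by (rule inner_regular[OF assms(4) _ B, symmetric]) simp
  finally show ?thesis .
qed

lemma weak_conv_gen_unique:
  fixes \<mu> \<nu> :: "'a::{second_countable_topology, complete_space} measure"
  assumes "weak_conv_gen \<mu>s \<mu>" "weak_conv_gen \<mu>s \<nu>"
    and "finite_measure \<mu>" "sets \<mu> = sets borel" "finite_measure \<nu>" "sets \<nu> = sets borel"
  shows "\<mu> = \<nu>"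
proof (rule measure_eqI)
  show "sets \<mu> = sets \<nu>" using assms(4,6) by simp
  have "integral\<^sup>L \<mu> \<phi> = integral\<^sup>L \<nu> \<phi>" if "continuous_on UNIV \<phi>" "bounded (range \<phi>)"
    for \<phi> :: "'a \<Rightarrow> real"
    using assms(1,2) that unfolding weak_conv_gen_def by (blast intro: LIMSEQ_unique)
  moreover fix B assume "B \<in> sets \<mu>"
  ultimately show "emeasure \<mu> B = emeasure \<nu> B"
    using assms(3-6) by (intro finite_measure_eqI_bounded_continuous) auto
qed

lemma integral_density_real:
  fixes f :: "'a::euclidean_space \<Rightarrow> real"
  assumes "f \<in> borel_measurable borel" "\<And>x. 0 \<le> f x" "\<phi> \<in> borel_measurable borel"
  shows "integral\<^sup>L (density lborel (\<lambda>x. ennreal (f x))) \<phi> = (\<integral>y. f y * \<phi> y \<partial>lborel)"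
  using assms by (subst integral_density) auto

lemma weak_conv_gen_density_if_L1:
  fixes f :: "nat \<Rightarrow> 'a::euclidean_space \<Rightarrow> real"
  assumes f: "\<And>n. integrable lborel (f n)" "\<And>n x. 0 \<le> f n x"
    and g: "integrable lborel g" "\<And>x. 0 \<le> g x"
    and L1: "(\<lambda>n. \<integral>x. \<bar>f n x - g x\<bar> \<partial>lborel) \<longlonglongrightarrow> 0"
  shows "weak_conv_gen (\<lambda>n. density lborel (\<lambda>x. ennreal (f n x))) (density lborel (\<lambda>x. ennreal (g x)))"
  unfolding weak_conv_gen_def
proof (intro allI impI, elim conjE)
  fix \<phi> :: "'a \<Rightarrow> real" assume cont: "continuous_on UNIV \<phi>" and "bounded (range \<phi>)"
  then obtain B where B: "\<And>y. \<bar>\<phi> y\<bar> \<le> B" unfolding bounded_iff by auto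
  have \<phi>: "\<phi> \<in> borel_measurable borel" using cont by (rule borel_measurable_continuous_onI)
  have int: "integrable lborel (\<lambda>y. h y * \<phi> y)" if "integrable lborel h" for h
  proof (rule Bochner_Integration.integrable_bound[OF integrable_mult_left[OF that, of B]])
    show "(\<lambda>y. h y * \<phi> y) \<in> borel_measurable lborel"
      using borel_measurable_integrable[OF that] \<phi> by simp
    show "AE y in lborel. norm (h y * \<phi> y) \<le> norm (h y * B)"
      using mult_left_mono[OF order_trans[OF B abs_ge_self] abs_ge_zero] by (intro AE_I2) (simp add: abs_mult)
  qed
  have "\<bar>(\<integral>y. f n y * \<phi> y \<partial>lborel) - (\<integral>y. g y * \<phi> y \<partial>lborel)\<bar>
      \<le> B * (\<integral>x. \<bar>f n x - g x\<bar> \<partial>lborel)" for n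
  proof -
    have "(\<integral>y. f n y * \<phi> y \<partial>lborel) - (\<integral>y. g y * \<phi> y \<partial>lborel) = (\<integral>y. (f n y - g y) * \<phi> y \<partial>lborel)"
      using int[OF f(1)] int[OF g(1)] by (simp add: left_diff_distrib)
    also have "\<bar>\<dots>\<bar> \<le> (\<integral>y. \<bar>f n y - g y\<bar> * B \<partial>lborel)"
      using int[OF Bochner_Integration.integrable_diff[OF f(1) g(1)]] f(1) g(1)
        mult_left_mono[OF B abs_ge_zero]
      by (intro integral_abs_bound_integral) (auto simp: abs_mult)
    finally show ?thesis by (simp add: mult.commute)
  qed
  then have "(\<lambda>n. (\<integral>y. f n y * \<phi> y \<partial>lborel) - (\<integral>y. g y * \<phi> y \<partial>lborel)) \<longlonglongrightarrow> 0"
    by (intro Lim_null_comparison[OF always_eventually tendsto_mult_right_zero[OF L1, of B]])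
       (simp only: real_norm_def, blast)
  then show "(\<lambda>n. integral\<^sup>L (density lborel (\<lambda>x. ennreal (f n x))) \<phi>)
      \<longlonglongrightarrow> integral\<^sup>L (density lborel (\<lambda>x. ennreal (g x))) \<phi>"
    using f g \<phi> by (simp add: integral_density_real LIM_zero_cancel)
qed

lemma tv_dist_density_le_L1:
  fixes f g :: "'a::euclidean_space \<Rightarrow> real"
  assumes f: "integrable lborel f" "\<And>x. 0 \<le> f x" and g: "integrable lborel g" "\<And>x. 0 \<le> g x"
  shows "tv_dist (density lborel (\<lambda>x. ennreal (f x))) (density lborel (\<lambda>x. ennreal (g x)))
    \<le> 2 * (\<integral>x. \<bar>f x - g x\<bar> \<partial>lborel)"
proof (rule tv_dist_le)
  fix B assume "B \<in> sets (density lborel (\<lambda>x. ennreal (f x)))"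
  then have B: "B \<in> sets borel" by simp
  have measure_eq: "measure (density lborel (\<lambda>x. ennreal (h x))) B = (\<integral>y. h y * indicator B y \<partial>lborel)"
    if "integrable lborel h" "\<And>x. 0 \<le> h x" for h :: "'a \<Rightarrow> real"
    using integral_density_real[of h "indicator B"] that B by simp
  have "\<bar>(\<integral>y. f y * indicator B y \<partial>lborel) - (\<integral>y. g y * indicator B y \<partial>lborel)\<bar>
      = \<bar>\<integral>y. (f y - g y) * indicator B y \<partial>lborel\<bar>"
    using f(1) g(1) B by (simp add: left_diff_distrib integrable_real_mult_indicator)
  also have "\<dots> \<le> (\<integral>y. \<bar>f y - g y\<bar> \<partial>lborel)"
    using f(1) g(1) B integrable_real_mult_indicator[OF _ Bochner_Integration.integrable_diff[OF f(1) g(1)]]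
    by (intro integral_abs_bound_integral) (auto simp: abs_mult indicator_def)
  finally show "\<bar>measure (density lborel (\<lambda>x. ennreal (f x))) B - measure (density lborel (\<lambda>x. ennreal (g x))) B\<bar>
      \<le> (\<integral>x. \<bar>f x - g x\<bar> \<partial>lborel)"
    using measure_eq f g by simp
qed

lemma L1_tendsto_zero_Scheffe:
  fixes f :: "nat \<Rightarrow> 'a::euclidean_space \<Rightarrow> real"
  assumes "\<And>n. f n \<in> borel_measurable borel" "\<And>n x. 0 \<le> f n x"
    and "\<And>x. (\<lambda>n. f n x) \<longlonglongrightarrow> g x" "integrable lborel g" "\<And>x. 0 \<le> g x"
    and "\<And>n. (\<integral>\<^sup>+x. f n x \<partial>lborel) = (\<integral>\<^sup>+x. g x \<partial>lborel)"
  shows "(\<lambda>n. \<integral>x. \<bar>f n x - g x\<bar> \<partial>lborel) \<longlonglongrightarrow> 0"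
proof -
  have "(\<lambda>n. \<integral>\<^sup>+x. norm (f n x - g x) \<partial>lborel) \<longlonglongrightarrow> 0"
    using assms by (intro Scheffe_lemma2) auto
  moreover have "integrable lborel (f n)" for n
    using assms(1,2,4,6) by (intro integrableI_bounded) (auto simp: less_top[symmetric])
  then have "(\<integral>\<^sup>+x. norm (f n x - g x) \<partial>lborel) = ennreal (\<integral>x. \<bar>f n x - g x\<bar> \<partial>lborel)" for n
    using assms(4) by (subst nn_integral_eq_integral) auto
  ultimately show ?thesis
    by (simp add: tendsto_ennreal_iff[symmetric] del: tendsto_ennreal_iff)
qed

definition cutoff :: "real \<Rightarrow> 'a::real_normed_vector \<Rightarrow> real" where
  "cutoff R y = max 0 (min 1 (R - norm y))"

lemma cutoff_range: "cutoff R y \<in> {0..1}"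
  unfolding cutoff_def by auto

lemma cutoff_le_indicator: "cutoff R y \<le> indicator (cball 0 R) y"
  unfolding cutoff_def by (auto simp: indicator_def)

lemma continuous_on_cutoff: "continuous_on UNIV (cutoff R)"
  unfolding cutoff_def by (intro continuous_intros)

lemma cutoff_tendsto_one: "((\<lambda>R. cutoff (real R) y) \<longlongrightarrow> 1) sequentially"
proof (rule tendsto_eventually)
  obtain K :: nat where "norm y + 1 < real K" using reals_Archimedean2 by blast
  then show "\<forall>\<^sub>F R in sequentially. cutoff (real R) y = 1"
    unfolding eventually_sequentially cutoff_def by (intro exI[of _ K]) auto
qed

lemma integral_cutoff_tendsto_one:
  assumes "prob_borel \<mu>"
  shows "(\<lambda>R. \<integral>y. cutoff (real R) y \<partial>\<mu>) \<longlonglongrightarrow> 1"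
proof -
  interpret prob_space \<mu> using prob_borelD(1)[OF assms] .
  have "(\<lambda>R. \<integral>y. cutoff (real R) y \<partial>\<mu>) \<longlonglongrightarrow> (\<integral>y. 1 \<partial>\<mu>)"
  proof (rule integral_dominated_convergence[where w="\<lambda>_. 1"])
    show "cutoff (real R) \<in> borel_measurable \<mu>" for R
      using borel_measurable_continuous_onI[OF continuous_on_cutoff]
      by (simp add: measurable_prob_borel_iff[OF assms])
    show "AE y in \<mu>. norm (cutoff (real R) y) \<le> 1" for R
      by (intro AE_I2) (auto simp: cutoff_def)
  qed (use cutoff_tendsto_one in auto)
  then show ?thesis by (simp add: prob_space)
qed

lemma integral_mult_cutoff_tendsto:
  fixes f :: "nat \<Rightarrow> 'a::euclidean_space \<Rightarrow> real"
  assumes fm: "\<And>n. f n \<in> borel_measurable borel" and gm: "g \<in> borel_measurable borel"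
    and fC: "\<And>n x. \<bar>f n x\<bar> \<le> C" and lim: "\<And>x. (\<lambda>n. f n x) \<longlonglongrightarrow> g x"
  shows "(\<lambda>n. \<integral>y. f n y * cutoff R y \<partial>lborel) \<longlonglongrightarrow> (\<integral>y. g y * cutoff R y \<partial>lborel)"
proof (rule integral_dominated_convergence[where w="\<lambda>y. C * indicator (cball 0 R) y"])
  show "integrable lborel (\<lambda>y. C * indicator (cball 0 R) y :: real)"
    using emeasure_bounded_finite[of "cball 0 R"]
    by (intro integrable_mult_right integrable_real_indicator) (auto simp: less_top[symmetric])
  show "AE y in lborel. norm (f n y * cutoff R y) \<le> C * indicator (cball 0 R) y" for n
  proof (intro AE_I2)
    fix y
    have "norm (f n y * cutoff R y) = \<bar>f n y\<bar> * cutoff R y"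
      using cutoff_range[of R y] by (simp add: abs_mult)
    also have "\<dots> \<le> C * indicator (cball 0 R) y"
      using fC[of n y] cutoff_le_indicator[of R y] cutoff_range[of R y]
      by (intro mult_mono) auto
    finally show "norm (f n y * cutoff R y) \<le> C * indicator (cball 0 R) y" .
  qed
  show "AE y in lborel. (\<lambda>n. f n y * cutoff R y) \<longlonglongrightarrow> g y * cutoff R y"
    using lim by (intro AE_I2 tendsto_mult) auto
qed (use fm gm in \<open>simp_all add: borel_measurable_times
      borel_measurable_continuous_onI[OF continuous_on_cutoff]\<close>)

lemma integral_mult_cutoff_le:
  fixes g :: "'a::euclidean_space \<Rightarrow> real"
  assumes gint: "integrable lborel g" and gnn: "\<And>x. 0 \<le> g x"
  shows "(\<integral>y. g y * cutoff R y \<partial>lborel) \<le> (\<integral>y. g y \<partial>lborel)"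
proof (rule integral_mono[OF _ gint])
  show le: "g y * cutoff R y \<le> g y" for y
    using gnn[of y] cutoff_range[of R y] by (simp add: mult_left_le)
  show "integrable lborel (\<lambda>y. g y * cutoff R y)"
  proof (rule Bochner_Integration.integrable_bound[OF gint])
    show "(\<lambda>y. g y * cutoff R y) \<in> borel_measurable lborel"
      using borel_measurable_integrable[OF gint]
      by (simp add: borel_measurable_times borel_measurable_continuous_onI[OF continuous_on_cutoff])
    show "AE y in lborel. norm (g y * cutoff R y) \<le> norm (g y)"
    proof (intro AE_I2)
      fix y
      show "norm (g y * cutoff R y) \<le> norm (g y)"
        using le[of y] gnn[of y] cutoff_range[of R y] by simp
    qed
  qed
qed

lemma nn_integral_limit_density_eq_one:
  fixes f :: "nat \<Rightarrow> 'a::euclidean_space \<Rightarrow> real" and \<mu> :: "'a measure"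
  assumes fm: "\<And>n. f n \<in> borel_measurable borel" and fnn: "\<And>n x. 0 \<le> f n x"
    and fC: "\<And>n x. f n x \<le> C" and fone: "\<And>n. (\<integral>\<^sup>+x. f n x \<partial>lborel) = 1"
    and lim: "\<And>x. (\<lambda>n. f n x) \<longlonglongrightarrow> g x" and \<mu>: "prob_borel \<mu>"
    and weak: "\<And>\<phi>. continuous_on UNIV \<phi> \<Longrightarrow> bounded (range \<phi>) \<Longrightarrow>
      (\<lambda>n. \<integral>y. f n y * \<phi> y \<partial>lborel) \<longlonglongrightarrow> (\<integral>y. \<phi> y \<partial>\<mu>)"
  shows "(\<integral>\<^sup>+x. g x \<partial>lborel) = 1"
proof -
  have gm: "g \<in> borel_measurable borel" by (rule borel_measurable_LIMSEQ_real[OF lim fm])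
  have gnn: "0 \<le> g x" for x by (rule LIMSEQ_le_const[OF lim]) (use fnn in auto)
  have "(\<integral>\<^sup>+x. g x \<partial>lborel) = (\<integral>\<^sup>+x. liminf (\<lambda>n. ennreal (f n x)) \<partial>lborel)"
    using lim by (intro nn_integral_cong lim_imp_Liminf[symmetric] tendsto_ennrealI) auto
  also have "\<dots> \<le> liminf (\<lambda>n. \<integral>\<^sup>+x. f n x \<partial>lborel)"
    using fm by (intro nn_integral_liminf) simp
  finally have le_one: "(\<integral>\<^sup>+x. g x \<partial>lborel) \<le> 1"
    by (simp add: fone Liminf_const)
  then have gint: "integrable lborel g"
    using gm gnn by (intro integrableI_bounded) (auto simp: less_top[symmetric] top_unique)
  have "\<bar>f n x\<bar> \<le> C" for n x using fnn[of n x] fC[of n x] by simp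
  from integral_mult_cutoff_tendsto[OF fm gm this lim]
  have "(\<integral>y. g y * cutoff (real R) y \<partial>lborel) = (\<integral>y. cutoff (real R) y \<partial>\<mu>)" for R :: nat
    by (rule LIMSEQ_unique[OF _ weak[OF continuous_on_cutoff bounded_range_unit_interval[OF cutoff_range]]])
  then have "(\<integral>y. cutoff (real R) y \<partial>\<mu>) \<le> (\<integral>x. g x \<partial>lborel)" for R :: nat
    using integral_mult_cutoff_le[OF gint gnn] by metis
  then have "1 \<le> (\<integral>x. g x \<partial>lborel)"
    by (intro LIMSEQ_le_const2[OF integral_cutoff_tendsto_one[OF \<mu>]]) auto
  moreover have "(\<integral>\<^sup>+x. g x \<partial>lborel) = ennreal (\<integral>x. g x \<partial>lborel)"
    using gint gnn by (simp add: nn_integral_eq_integral)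
  ultimately show ?thesis
    using le_one by (metis antisym ennreal_1 ennreal_leI)
qed

lemma tv_dist_tendsto_zero_if_equicontinuous_densities:
  fixes f :: "nat \<Rightarrow> 'a::euclidean_space \<Rightarrow> real"
  assumes fm: "\<And>n. f n \<in> borel_measurable borel" and fnn: "\<And>n x. 0 \<le> f n x"
    and prob: "\<And>n. prob_space (density lborel (\<lambda>x. ennreal (f n x)))"
    and fC: "\<And>n x. f n x \<le> C"
    and eqc: "\<forall>e>0. \<exists>\<delta>>0. \<forall>n x y. dist x y < \<delta> \<longrightarrow> \<bar>f n x - f n y\<bar> < e"
    and \<mu>: "prob_borel \<mu>"
    and W: "weak_conv_gen (\<lambda>n. density lborel (\<lambda>x. ennreal (f n x))) \<mu>"
  shows "(\<lambda>n. tv_dist (density lborel (\<lambda>x. ennreal (f n x))) \<mu>) \<longlonglongrightarrow> 0"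
proof -
  have f_one: "(\<integral>\<^sup>+x. f n x \<partial>lborel) = 1" for n
    using prob_space.emeasure_space_1[OF prob[of n]] fm by (simp add: emeasure_density)
  have f_int: "integrable lborel (f n)" for n
    using fm fnn f_one by (intro integrableI_bounded) auto
  have weak: "(\<lambda>n. \<integral>y. f n y * \<phi> y \<partial>lborel) \<longlonglongrightarrow> (\<integral>y. \<phi> y \<partial>\<mu>)"
    if "continuous_on UNIV \<phi>" "bounded (range \<phi>)" for \<phi>
  proof -
    have "(\<lambda>n. integral\<^sup>L (density lborel (\<lambda>x. ennreal (f n x))) \<phi>) \<longlonglongrightarrow> integral\<^sup>L \<mu> \<phi>"
      using W that unfolding weak_conv_gen_def by blast
    then show ?thesis
      using integral_density_real[OF fm fnn borel_measurable_continuous_onI[OF that(1)]] by simp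
  qed
  define g where "g x = lim (\<lambda>n. f n x)" for x
  have "convergent (\<lambda>n. f n x)" for x
    using fnn fC
    by (intro pointwise_convergent_if_equicontinuous[OF fm _ eqc, of C])
       (auto simp: convergent_def intro: weak)
  then have lim: "(\<lambda>n. f n x) \<longlonglongrightarrow> g x" for x
    unfolding g_def by (simp add: convergent_LIMSEQ_iff)
  have g: "g \<in> borel_measurable borel" "\<And>x. 0 \<le> g x"
    using borel_measurable_LIMSEQ_real[OF lim fm] LIMSEQ_le_const[OF lim] fnn by auto
  have g_one: "(\<integral>\<^sup>+x. g x \<partial>lborel) = 1"
    by (rule nn_integral_limit_density_eq_one[OF fm fnn fC f_one lim \<mu> weak])
  have g_int: "integrable lborel g"
    using g g_one by (intro integrableI_bounded) auto
  have L1: "(\<lambda>n. \<integral>x. \<bar>f n x - g x\<bar> \<partial>lborel) \<longlonglongrightarrow> 0"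
    using fm fnn lim g_int g f_one g_one by (intro L1_tendsto_zero_Scheffe) auto
  interpret \<mu>: prob_space \<mu> using prob_borelD(1)[OF \<mu>] .
  have "finite_measure (density lborel (\<lambda>x. ennreal (g x)))"
    using g(1) g_one by (intro finite_measureI) (simp add: emeasure_density)
  then have "\<mu> = density lborel (\<lambda>x. ennreal (g x))"
    using weak_conv_gen_density_if_L1[OF f_int fnn g_int g(2) L1] prob_borelD(2)[OF \<mu>]
    by (intro weak_conv_gen_unique[OF W] \<mu>.finite_measure_axioms) auto
  then show ?thesis
    using tv_dist_density_le_L1[OF f_int fnn g_int g(2)] prob_borelD(1)[OF \<mu>]
    by (intro tv_dist_tendsto_zeroI[OF prob _ _ tendsto_mult_right_zero[OF L1]]) auto
qed

theorem lemma2: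
  fixes M :: nat
  shows
  "(\<forall>(f :: nat \<Rightarrow> 'a::euclidean_space \<Rightarrow> real) \<mu>.
      (\<forall>n. f n \<in> borel_measurable borel \<and> (\<forall>x. 0 \<le> f n x) \<and>
           prob_space (density lborel (\<lambda>x. ennreal (f n x)))) \<and>
      (\<exists>C. \<forall>n x. f n x \<le> C) \<and>
      (\<forall>e>0. \<exists>\<delta>>0. \<forall>n x y. dist x y < \<delta> \<longrightarrow> \<bar>f n x - f n y\<bar> < e) \<and>
      prob_borel \<mu> \<and>
      weak_conv_gen (\<lambda>n. density lborel (\<lambda>x. ennreal (f n x))) \<mu>
      \<longrightarrow> (\<lambda>n. tv_dist (density lborel (\<lambda>x. ennreal (f n x))) \<mu>) \<longlonglongrightarrow> 0)
   \<and>
   (\<forall>(Qs :: nat \<Rightarrow> 'a \<Rightarrow> nat) Q P.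
      (\<forall>n. Qs n \<in> convex_quantizers M) \<and> Q \<in> convex_quantizers M \<and>
      prob_borel P \<and> has_density P \<and>
      weak_conv_gen (\<lambda>n. joint P (Qs n)) (joint P Q)
      \<longrightarrow> ((\<lambda>n. tv_dist (joint P (Qs n)) (joint P Q)) \<longlonglongrightarrow> 0) \<and>
          (has_pos_density P \<longrightarrow>
             (\<forall>P'. prob_borel P' \<and> has_density P' \<longrightarrow>
                (\<lambda>n. tv_dist (joint P' (Qs n)) (joint P' Q)) \<longlonglongrightarrow> 0)))
   \<and>
   (\<forall>(Qs :: nat \<Rightarrow> 'a \<Rightarrow> nat) Q P Ps' P'.
      (\<forall>n. Qs n \<in> convex_quantizers M) \<and> Q \<in> convex_quantizers M \<and>
      prob_borel P \<and> has_pos_density P \<and>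
      weak_conv_gen (\<lambda>n. joint P (Qs n)) (joint P Q) \<and>
      (\<forall>n. prob_borel (Ps' n)) \<and> prob_borel P' \<and> has_density P' \<and>
      (\<lambda>n. tv_dist (Ps' n) P') \<longlonglongrightarrow> 0
      \<longrightarrow> (\<lambda>n. tv_dist (joint (Ps' n) (Qs n)) (joint P' Q)) \<longlonglongrightarrow> 0)"
  apply (intro conjI allI impI; elim conjE exE)
  subgoal
    by (rule tv_dist_tendsto_zero_if_equicontinuous_densities) auto
  subgoal for Qs Q P
    using measure_disagreement_tendsto_zero[of P M Qs Q]
    by (intro tv_dist_joint_tendsto_zero[where Ps'="\<lambda>_. P" and M=M])
       (auto simp: tv_dist_self convex_quantizer_imp_quantizer)
  subgoal for Qs Q P P'
    using measure_disagreement_tendsto_zero_if_pos_density[of P P' M Qs Q]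
    by (intro tv_dist_joint_tendsto_zero[where Ps'="\<lambda>_. P'" and M=M])
       (auto simp: tv_dist_self convex_quantizer_imp_quantizer)
  subgoal for Qs Q P Ps' P'
    using measure_disagreement_tendsto_zero_if_pos_density[of P P' M Qs Q]
    by (intro tv_dist_joint_tendsto_zero[where M=M]) (auto simp: convex_quantizer_imp_quantizer)
  done

end
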